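(* Let $A_1\in N_p$ and $A_2\in N_q$ be Belitskii canonical forms (under $B_p$- and $B_q$-similarity respectively), with $A_1\in Q_1U_p$ and $A_2\in Q_2U_q$ for subpermutations $Q_1\in N_p$ and $Q_2\in N_q$. If $Q_{12}\in M_{p,q}(\mathbb F)$ is such that $\begin{pmatrix}Q_1&Q_{12}\\0&Q_2\end{pmatrix}$ is a subpermutation, then $\begin{pmatrix}A_1&Q_{12}\\0&A_2\end{pmatrix}$ is a Belitskii canonical form in $N_{p+q}$ (under $B_{p+q}$-similarity).
   Context: $\mathbb F$ is a field. For each $m$, $B_m$ (resp. $U_m$, $N_m$) denotes the set of $m\times m$ invertible upper triangular (resp. upper triangular with all diagonal entries $1$, strictly upper triangular) matrices over $\mathbb F$; $M_{p,q}(\mathbb F)$ is the set of $p\times q$ matrices; $QU_m=\{QU:U\in U_m\}$. A subpermutation is a matrix each of whose rows and columns has at most one nonzero entry, and that entry equals $1$. Matrices $A,C$ are $G$-similar if $C=BAB^{-1}$ for some $B\in G$. Belitskii order on positions $\{(i,j):1\le i<j\le m\}$: $(i,j)\prec(i',j')$ iff $i>i'$, or $i=i'$ and $j<j'$ (so $(m-1,m)\prec(m-2,m-1)\prec(m-2,m)\prec\cdots\prec(1,m)$). Belitskii's algorithm for $B_m$-similarity on $N_m$: given $A\in N_m$ put $A^{(0)}=A$, $G^{(0)}=B_m$. For $k=0,1,\dots$, let $(p',q')$ be the $(k+1)$th position in Belitskii order and look at the $(p',q')$ entries of all matrices $G^{(k)}$-similar to $A^{(k)}$: (a) if this entry is always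 $0$ or can take every value of $\mathbb F$, choose $A^{(k+1)}$ $G^{(k)}$-similar to $A^{(k)}$ with that entry $0$; (b) if it takes exactly the values of $\mathbb F\setminus\{0\}$, choose $A^{(k+1)}$ with that entry $1$; (c) otherwise it is a constant $\lambda\neq 0$ and $A^{(k+1)}=A^{(k)}$. $G^{(k+1)}$ is the subgroup of $g\in G^{(k)}$ such that $gA^{(k+1)}g^{-1}$ agrees with $A^{(k+1)}$ in the first $k+1$ positions. The final matrix is the Belitskii canonical form of $A$; a matrix is a Belitskii canonical form if it is the Belitskii canonical form of some matrix. *)

theory Defs
  imports "Jordan_Normal_Form.Matrix"
begin

text \<open>Matrices are Jordan_Normal_Form matrices; indices are 0-based, so the
  paper's position (i,j) (1-based) corresponds to (i-1,j-1) here.\<close>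

definition Nm :: "nat \<Rightarrow> 'a::field mat set" where
  "Nm m = {A \<in> carrier_mat m m. \<forall>i<m. \<forall>j<m. j \<le> i \<longrightarrow> A $$ (i,j) = 0}"

definition Bm :: "nat \<Rightarrow> 'a::field mat set" where
  "Bm m = {B \<in> carrier_mat m m. upper_triangular B \<and> invertible_mat B}"

definition Um :: "nat \<Rightarrow> 'a::field mat set" where
  "Um m = {U \<in> carrier_mat m m. upper_triangular U \<and> (\<forall>i<m. U $$ (i,i) = 1)}"

definition QU :: "nat \<Rightarrow> 'a::field mat \<Rightarrow> 'a mat set" where
  "QU m Q = {Q * U | U. U \<in> Um m}"

definition subperm :: "'a::field mat \<Rightarrow> bool" where
  "subperm A \<longleftrightarrow>
     (\<forall>i<dim_row A. \<forall>j<dim_col A. A $$ (i,j) = 0 \<or> A $$ (i,j) = 1) \<and>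
     (\<forall>i<dim_row A. \<forall>j<dim_col A. \<forall>j'<dim_col A.
        A $$ (i,j) \<noteq> 0 \<longrightarrow> A $$ (i,j') \<noteq> 0 \<longrightarrow> j = j') \<and>
     (\<forall>j<dim_col A. \<forall>i<dim_row A. \<forall>i'<dim_row A.
        A $$ (i,j) \<noteq> 0 \<longrightarrow> A $$ (i',j) \<noteq> 0 \<longrightarrow> i = i')"

definition conj_by :: "nat \<Rightarrow> 'a::field mat \<Rightarrow> 'a mat \<Rightarrow> 'a mat \<Rightarrow> bool" where
  "conj_by m g A C \<longleftrightarrow> (\<exists>h \<in> carrier_mat m m.
      g * h = 1\<^sub>m m \<and> h * g = 1\<^sub>m m \<and> C = g * A * h)"

definition G_similar :: "nat \<Rightarrow> 'a::field mat set \<Rightarrow> 'a mat \<Rightarrow> 'a mat \<Rightarrow> bool" where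
  "G_similar m G A C \<longleftrightarrow> (\<exists>g \<in> G. conj_by m g A C)"

definition belitskii_positions :: "nat \<Rightarrow> (nat \<times> nat) list" where
  "belitskii_positions m = concat (map (\<lambda>i. map (\<lambda>j. (i,j)) [Suc i..<m]) (rev [0..<m]))"

definition orbit_entries :: "nat \<Rightarrow> 'a::field mat set \<Rightarrow> 'a mat \<Rightarrow> nat \<times> nat \<Rightarrow> 'a set" where
  "orbit_entries m G A pos = {C $$ pos | C. G_similar m G A C}"

definition belitskii_step ::
  "nat \<Rightarrow> nat \<Rightarrow> 'a::field mat \<Rightarrow> 'a mat set \<Rightarrow> 'a mat \<Rightarrow> 'a mat set \<Rightarrow> bool" where
  "belitskii_step m k A G A' G' \<longleftrightarrow>
     (let ps = belitskii_positions m; pos = ps ! k; S = orbit_entries m G A pos in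
       (if S = {0} \<or> S = UNIV then G_similar m G A A' \<and> A' $$ pos = 0
        else if S = UNIV - {0} then G_similar m G A A' \<and> A' $$ pos = 1
        else A' = A) \<and>
       G' = {g \<in> G. \<exists>C. conj_by m g A' C \<and> (\<forall>t\<le>k. C $$ (ps ! t) = A' $$ (ps ! t))})"

definition belitskii_cf_of :: "nat \<Rightarrow> 'a::field mat \<Rightarrow> 'a mat \<Rightarrow> bool" where
  "belitskii_cf_of m A C \<longleftrightarrow>
     (\<exists>As Gs. As 0 = A \<and> Gs 0 = Bm m \<and>
        (\<forall>k < length (belitskii_positions m).
           belitskii_step m k (As k) (Gs k) (As (Suc k)) (Gs (Suc k))) \<and>
        C = As (length (belitskii_positions m)))"

definition belitskii_cf :: "nat \<Rightarrow> 'a::field mat \<Rightarrow> bool" where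
  "belitskii_cf m C \<longleftrightarrow> (\<exists>A \<in> Nm m. belitskii_cf_of m A C)"

end

theory Submission
  imports Defs "Jordan_Normal_Form.Determinant"
begin

(* A matrix C in N_m is a Belitskii canonical form exactly when each entry C(i,j) is admissible
  for the set S of values that the (i,j) entry takes on the orbit of C under the subgroup of B_m
  fixing all entries preceding (i,j): C(i,j) = 0 if S is the whole field, and C(i,j) = 1 if S is
  the field without 0. A run of the algorithm started at such a C may leave C unchanged;
  conversely, in any run the entry produced at a position is admissible, and it is never changed
  afterwards because later steps only conjugate by elements fixing it.

  For the block matrix M, an entry inside a diagonal block A_k meets fewer values than in A_k
  itself, since an upper triangular g restricts to an upper triangular block fixing the same
  earlier entries of A_k; so admissibility is inherited. Outside the diagonal blocks the nonzero
  entries of M are the 1s of the subpermutation Q = [Q1 Q12; 0 Q2], and a 1 of Q at (a,c) is a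
  leading 1 of row a of M. If g fixes every entry of M preceding such a 1 at (i,j) and
  D = g M g^-1 had D(i,j) = 0, then row i of D g = g M would vanish up to column j; but at the
  leftmost leading 1 among the rows reached by row i of g, row i of g M is a nonzero entry of g.
  So 0 is not in the value set at (i,j). *)

section \<open>Upper triangular matrices and the group B_m\<close>

lemma sum_eq_single:
  assumes "finite A" "x \<in> A" "\<And>y. y \<in> A \<Longrightarrow> y \<noteq> x \<Longrightarrow> f y = 0"
  shows "sum f A = f x"
  using sum.mono_neutral_right[of A "{x}" f] assms by auto

lemma index_mult_mat_sum:
  assumes "A \<in> carrier_mat n k" "B \<in> carrier_mat k m" "i < n" "j < m"
  shows "(A * B) $$ (i,j) = (\<Sum>l<k. A $$ (i,l) * B $$ (l,j))"
  using assms by (auto simp: scalar_prod_def atLeast0LessThan intro!: sum.cong)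

lemma upper_triangular_mult:
  assumes "A \<in> carrier_mat m m" "B \<in> carrier_mat m m" "upper_triangular A" "upper_triangular B"
  shows "upper_triangular (A * B)"
proof (rule upper_triangularI)
  fix i j assume ji: "j < i" and "i < dim_row (A * B)"
  hence im: "i < m" using assms by simp
  have "(A * B) $$ (i,j) = (\<Sum>l<m. A $$ (i,l) * B $$ (l,j))"
    using index_mult_mat_sum[OF assms(1,2) im] ji im by simp
  also have "\<dots> = 0"
  proof (rule sum.neutral, intro ballI)
    fix l assume l: "l \<in> {..<m}"
    show "A $$ (i,l) * B $$ (l,j) = 0"
    proof (cases "l < i")
      case True thus ?thesis using upper_triangularD[OF assms(3) True] assms(1) im by simp
    next
      case False thus ?thesis using upper_triangularD[OF assms(4), of j l] assms(2) l ji by simp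
    qed
  qed
  finally show "(A * B) $$ (i,j) = 0" .
qed

lemma upper_triangular_left_inverse:
  fixes g h :: "'a::field mat"
  assumes g: "g \<in> carrier_mat m m" "upper_triangular g" "\<And>i. i < m \<Longrightarrow> g $$ (i,i) \<noteq> 0"
    and h: "h \<in> carrier_mat m m" "h * g = 1\<^sub>m m"
  shows "upper_triangular h"
proof (rule upper_triangularI)
  fix i j assume "j < i" and "i < dim_row h"
  hence im: "i < m" using h by simp
  show "h $$ (i,j) = 0" using \<open>j < i\<close>
  proof (induction j rule: less_induct)
    case (less j)
    have jm: "j < m" using less im by simp
    have "0 = (h * g) $$ (i,j)" using h less im jm by simp
    also have "\<dots> = (\<Sum>l<m. h $$ (i,l) * g $$ (l,j))" using index_mult_mat_sum[OF h(1) g(1) im jm] .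
    also have "\<dots> = h $$ (i,j) * g $$ (j,j)"
    proof (rule sum_eq_single)
      fix l assume l: "l \<in> {..<m}" "l \<noteq> j"
      show "h $$ (i,l) * g $$ (l,j) = 0"
      proof (cases "l < j")
        case True thus ?thesis using less by auto
      next
        case False thus ?thesis using upper_triangularD[OF g(2), of j l] g(1) l by simp
      qed
    qed (use jm in auto)
    finally show ?case using g(3)[OF jm] by simp
  qed
qed

lemma mult_inverse_mat:
  fixes g1 g2 h1 h2 :: "'a::field mat"
  assumes "g1 \<in> carrier_mat m m" "g2 \<in> carrier_mat m m" "h1 \<in> carrier_mat m m" "h2 \<in> carrier_mat m m"
    and "g1 * h1 = 1\<^sub>m m" "g2 * h2 = 1\<^sub>m m"
  shows "(g1 * g2) * (h2 * h1) = 1\<^sub>m m"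
proof -
  have "(g1 * g2) * (h2 * h1) = g1 * ((g2 * h2) * h1)"
    using assms(1-4) by (simp add: assoc_mult_mat[of _ m m _ m _ m])
  thus ?thesis using assms by simp
qed

lemma Bm_carrier: "g \<in> Bm m \<Longrightarrow> g \<in> carrier_mat m m"
  by (simp add: Bm_def)

lemma Bm_upper_triangular: "g \<in> Bm m \<Longrightarrow> upper_triangular g"
  by (simp add: Bm_def)

lemma BmI:
  fixes g h :: "'a::field mat"
  assumes "g \<in> carrier_mat m m" "upper_triangular g" "h \<in> carrier_mat m m"
    "g * h = 1\<^sub>m m" "h * g = 1\<^sub>m m"
  shows "g \<in> Bm m"
  using assms unfolding Bm_def invertible_mat_def inverts_mat_def by auto

lemma Bm_inverse:
  assumes "g \<in> Bm m"
  obtains h where "h \<in> carrier_mat m m" "g * h = 1\<^sub>m m" "h * g = 1\<^sub>m m"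
proof -
  have g: "g \<in> carrier_mat m m" and "invertible_mat g" using assms by (auto simp: Bm_def)
  then obtain h where h: "g * h = 1\<^sub>m m" "h * g = 1\<^sub>m (dim_row h)"
    unfolding invertible_mat_def inverts_mat_def by auto
  have "dim_col h = m" using arg_cong[OF h(1), of dim_col] by simp
  moreover have "dim_row h = m" using arg_cong[OF h(2), of dim_col] g by simp
  ultimately show ?thesis using that h by auto
qed

lemma Bm_diag_nonzero:
  assumes "g \<in> Bm m" "i < m"
  shows "g $$ (i,i) \<noteq> 0"
proof -
  obtain h where h: "h \<in> carrier_mat m m" "g * h = 1\<^sub>m m"
    using Bm_inverse[OF assms(1)] by blast
  have g: "g \<in> carrier_mat m m" "upper_triangular g" using assms by (auto simp: Bm_def)
  have "det g * det h = 1" using det_mult[OF g(1) h(1)] h(2) by simp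
  hence "0 \<notin> set (diag_mat g)" using upper_triangular_imp_det_eq_0_iff[OF g] by auto
  thus ?thesis using assms g by (auto simp: diag_mat_def)
qed

lemma one_mat_Bm: "(1\<^sub>m m :: 'a::field mat) \<in> Bm m"
  by (rule BmI[of _ _ "1\<^sub>m m"]) auto

lemma Bm_mult:
  fixes g1 g2 :: "'a::field mat"
  assumes "g1 \<in> Bm m" "g2 \<in> Bm m"
  shows "g1 * g2 \<in> Bm m"
proof -
  obtain h1 where h1: "h1 \<in> carrier_mat m m" "g1 * h1 = 1\<^sub>m m" "h1 * g1 = 1\<^sub>m m"
    using Bm_inverse[OF assms(1)] by blast
  obtain h2 where h2: "h2 \<in> carrier_mat m m" "g2 * h2 = 1\<^sub>m m" "h2 * g2 = 1\<^sub>m m"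
    using Bm_inverse[OF assms(2)] by blast
  note g = Bm_carrier[OF assms(1)] Bm_carrier[OF assms(2)]
  show ?thesis
  proof (rule BmI)
    show "(g1 * g2) * (h2 * h1) = 1\<^sub>m m" using mult_inverse_mat[OF g h1(1) h2(1) h1(2) h2(2)] .
    show "(h2 * h1) * (g1 * g2) = 1\<^sub>m m" using mult_inverse_mat[OF h2(1) h1(1) g(2,1) h2(3) h1(3)] .
  qed (use g h1 h2 assms in \<open>auto intro!: upper_triangular_mult simp: Bm_def\<close>)
qed

lemma Bm_inverse_Bm:
  fixes g h :: "'a::field mat"
  assumes "g \<in> Bm m" "h \<in> carrier_mat m m" "g * h = 1\<^sub>m m" "h * g = 1\<^sub>m m"
  shows "h \<in> Bm m"
proof (rule BmI[OF assms(2) _ Bm_carrier[OF assms(1)] assms(4,3)])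
  show "upper_triangular h"
    using upper_triangular_left_inverse[OF Bm_carrier[OF assms(1)] Bm_upper_triangular[OF assms(1)]
        Bm_diag_nonzero[OF assms(1)] assms(2,4)] .
qed

lemma conj_by_iff:
  fixes g h :: "'a::field mat"
  assumes "g \<in> carrier_mat m m" "h \<in> carrier_mat m m" "g * h = 1\<^sub>m m" "h * g = 1\<^sub>m m"
  shows "conj_by m g X C \<longleftrightarrow> C = g * X * h"
proof
  assume "conj_by m g X C"
  then obtain h' where h': "h' \<in> carrier_mat m m" "g * h' = 1\<^sub>m m" "C = g * X * h'"
    unfolding conj_by_def by blast
  have "h' = (h * g) * h'" using assms h' by simp
  also have "\<dots> = h * (g * h')" using assoc_mult_mat[OF assms(2,1) h'(1)] .
  also have "\<dots> = h" using assms h' by simp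
  finally show "C = g * X * h" using h' by simp
next
  assume "C = g * X * h"
  thus "conj_by m g X C" using assms unfolding conj_by_def by blast
qed

lemma conj_by_exists:
  fixes g :: "'a::field mat"
  assumes "g \<in> Bm m"
  shows "\<exists>D. conj_by m g X D"
  using Bm_inverse[OF assms] unfolding conj_by_def by blast

lemma conj_by_unique:
  fixes g :: "'a::field mat"
  assumes "g \<in> Bm m" "conj_by m g X C" "conj_by m g X D"
  shows "C = D"
proof -
  obtain h where h: "h \<in> carrier_mat m m" "g * h = 1\<^sub>m m" "h * g = 1\<^sub>m m"
    using Bm_inverse[OF assms(1)] by blast
  show ?thesis using assms(2,3) conj_by_iff[OF Bm_carrier[OF assms(1)] h] by simp
qed

lemma conj_by_one_mat:
  fixes X :: "'a::field mat"
  assumes "X \<in> carrier_mat m m"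
  shows "conj_by m (1\<^sub>m m) X X"
  unfolding conj_by_def using assms by (intro bexI[of _ "1\<^sub>m m"]) auto

lemma conj_by_mult:
  fixes g1 g2 X :: "'a::field mat"
  assumes X: "X \<in> carrier_mat m m" and g: "g1 \<in> Bm m" "g2 \<in> Bm m"
    and c: "conj_by m g2 X Y" "conj_by m g1 Y Z"
  shows "conj_by m (g1 * g2) X Z"
proof -
  obtain h1 where h1: "h1 \<in> carrier_mat m m" "g1 * h1 = 1\<^sub>m m" "h1 * g1 = 1\<^sub>m m"
    using Bm_inverse[OF g(1)] by blast
  obtain h2 where h2: "h2 \<in> carrier_mat m m" "g2 * h2 = 1\<^sub>m m" "h2 * g2 = 1\<^sub>m m"
    using Bm_inverse[OF g(2)] by blast
  note gc = Bm_carrier[OF g(1)] Bm_carrier[OF g(2)]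
  have "Z = g1 * (g2 * X * h2) * h1"
    using c conj_by_iff[OF gc(2) h2] conj_by_iff[OF gc(1) h1] by simp
  also have "\<dots> = (g1 * g2) * X * (h2 * h1)"
    using gc h1 h2 X by (simp add: assoc_mult_mat[of _ m m _ m _ m])
  finally show ?thesis
    unfolding conj_by_def using mult_inverse_mat[OF gc h1(1) h2(1) h1(2) h2(2)]
      mult_inverse_mat[OF h2(1) h1(1) gc(2,1) h2(3) h1(3)] h1(1) h2(1)
    by (intro bexI[of _ "h2 * h1"]) auto
qed

lemma Nm_carrier: "X \<in> Nm m \<Longrightarrow> X \<in> carrier_mat m m"
  by (simp add: Nm_def)

lemma NmD: "X \<in> Nm m \<Longrightarrow> i < m \<Longrightarrow> j < m \<Longrightarrow> j \<le> i \<Longrightarrow> X $$ (i,j) = 0"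
  by (simp add: Nm_def)

lemma Nm_upper_triangular: "X \<in> Nm m \<Longrightarrow> upper_triangular X"
  by (auto simp: Nm_def)

lemma upper_triangular_mult_Nm:
  fixes g X :: "'a::field mat"
  assumes g: "g \<in> carrier_mat m m" "upper_triangular g" and X: "X \<in> Nm m"
  shows "g * X \<in> Nm m"
proof -
  have Xc: "X \<in> carrier_mat m m" using Nm_carrier[OF X] .
  have "(g * X) $$ (i,j) = 0" if ij: "i < m" "j < m" "j \<le> i" for i j
  proof -
    have "(g * X) $$ (i,j) = (\<Sum>l<m. g $$ (i,l) * X $$ (l,j))"
      using index_mult_mat_sum[OF g(1) Xc] ij by simp
    also have "\<dots> = 0"
    proof (rule sum.neutral, intro ballI)
      fix l assume l: "l \<in> {..<m}"
      show "g $$ (i,l) * X $$ (l,j) = 0"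
      proof (cases "l < i")
        case True thus ?thesis using upper_triangularD[OF g(2) True] g(1) ij by simp
      next
        case False thus ?thesis using NmD[OF X, of l j] l ij by simp
      qed
    qed
    finally show ?thesis .
  qed
  thus ?thesis using g Xc unfolding Nm_def by auto
qed

lemma Nm_mult_upper_triangular:
  fixes h X :: "'a::field mat"
  assumes h: "h \<in> carrier_mat m m" "upper_triangular h" and X: "X \<in> Nm m"
  shows "X * h \<in> Nm m"
proof -
  have Xc: "X \<in> carrier_mat m m" using Nm_carrier[OF X] .
  have "(X * h) $$ (i,j) = 0" if ij: "i < m" "j < m" "j \<le> i" for i j
  proof -
    have "(X * h) $$ (i,j) = (\<Sum>l<m. X $$ (i,l) * h $$ (l,j))"
      using index_mult_mat_sum[OF Xc h(1)] ij by simp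
    also have "\<dots> = 0"
    proof (rule sum.neutral, intro ballI)
      fix l assume l: "l \<in> {..<m}"
      show "X $$ (i,l) * h $$ (l,j) = 0"
      proof (cases "l \<le> i")
        case True thus ?thesis using NmD[OF X, of i l] l ij by simp
      next
        case False thus ?thesis using upper_triangularD[OF h(2), of j l] h(1) l ij by simp
      qed
    qed
    finally show ?thesis .
  qed
  thus ?thesis using h Xc unfolding Nm_def by auto
qed

lemma conj_by_Nm:
  fixes g X :: "'a::field mat"
  assumes g: "g \<in> Bm m" and X: "X \<in> Nm m" and c: "conj_by m g X D"
  shows "D \<in> Nm m"
proof -
  obtain h where h: "h \<in> carrier_mat m m" "g * h = 1\<^sub>m m" "h * g = 1\<^sub>m m"
    using Bm_inverse[OF g] by blast
  have "D = g * X * h" using c conj_by_iff[OF Bm_carrier[OF g] h] by simp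
  thus ?thesis
    using Nm_mult_upper_triangular[OF h(1) Bm_upper_triangular[OF Bm_inverse_Bm[OF g h]]
        upper_triangular_mult_Nm[OF Bm_carrier[OF g] Bm_upper_triangular[OF g] X]] by simp
qed

section \<open>The Belitskii order\<close>

definition bel_less :: "nat \<times> nat \<Rightarrow> nat \<times> nat \<Rightarrow> bool" where
  "bel_less x y \<longleftrightarrow> fst y < fst x \<or> (fst x = fst y \<and> snd x < snd y)"

lemma set_belitskii_positions: "set (belitskii_positions m) = {(i,j). i < j \<and> j < m}"
proof -
  have "\<exists>x\<in>{0..<m}. (a, b) \<in> Pair x ` {Suc x..<m}" if "a < b" "b < m" for a b
    using that by (intro bexI[of _ a]) auto
  thus ?thesis unfolding belitskii_positions_def by auto
qed

lemma sorted_wrt_bel_less_belitskii_positions: "sorted_wrt bel_less (belitskii_positions m)"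
proof -
  have "sorted_wrt bel_less (concat (map (\<lambda>i. map (\<lambda>j. (i,j)) [Suc i..<m]) rows))"
    if "sorted_wrt (>) rows" for rows
    using that
  proof (induction rows)
    case (Cons i rows)
    have "sorted_wrt bel_less (map (\<lambda>j. (i,j)) [Suc i..<m])"
      by (simp add: sorted_wrt_map bel_less_def sorted_wrt_upt)
    thus ?case using Cons by (simp add: sorted_wrt_append) (auto simp: bel_less_def)
  qed simp
  thus ?thesis unfolding belitskii_positions_def by (simp add: sorted_wrt_rev sorted_wrt_upt)
qed

lemma bel_less_belitskii_positions_nth_iff:
  assumes "k < length (belitskii_positions m)" "t < length (belitskii_positions m)"
  shows "bel_less (belitskii_positions m ! t) (belitskii_positions m ! k) \<longleftrightarrow> t < k"
proof
  note sorted = sorted_wrt_nth_less[OF sorted_wrt_bel_less_belitskii_positions]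
  assume less: "bel_less (belitskii_positions m ! t) (belitskii_positions m ! k)"
  show "t < k"
  proof (rule ccontr)
    assume "\<not> t < k"
    then consider "t = k" | "k < t" by linarith
    thus False
    proof cases
      case 1 thus False using less by (simp add: bel_less_def)
    next
      case 2 thus False using less sorted[OF 2 assms(2)] by (auto simp: bel_less_def)
    qed
  qed
qed (use sorted_wrt_nth_less[OF sorted_wrt_bel_less_belitskii_positions] assms in blast)

lemma belitskii_positions_index:
  assumes "a < b" "b < m"
  obtains t where "t < length (belitskii_positions m)" "belitskii_positions m ! t = (a,b)"
  using assms set_belitskii_positions[of m] by (metis (mono_tags) case_prodI in_set_conv_nth mem_Collect_eq)

lemma belitskii_positions_nth:
  assumes "t < length (belitskii_positions m)"
  obtains i j where "belitskii_positions m ! t = (i,j)" "i < j" "j < m"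
  using nth_mem[OF assms] set_belitskii_positions[of m] by auto

lemma upper_triangular_mult_index_eq:
  fixes g X Y :: "'a::field mat"
  assumes g: "g \<in> carrier_mat m m" "upper_triangular g"
    and X: "X \<in> Nm m" and Y: "Y \<in> Nm m" and ib: "i < m" "b < m"
    and agree: "\<And>l. i \<le> l \<Longrightarrow> l < b \<Longrightarrow> X $$ (l,b) = Y $$ (l,b)"
  shows "(g * X) $$ (i,b) = (g * Y) $$ (i,b)"
proof -
  have "(g * X) $$ (i,b) = (\<Sum>l<m. g $$ (i,l) * X $$ (l,b))"
    using index_mult_mat_sum[OF g(1) Nm_carrier[OF X] ib] .
  also have "\<dots> = (\<Sum>l<m. g $$ (i,l) * Y $$ (l,b))"
  proof (rule sum.cong[OF refl])
    fix l assume l: "l \<in> {..<m}"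
    consider "l < i" | "b \<le> l" | "i \<le> l" "l < b" by linarith
    thus "g $$ (i,l) * X $$ (l,b) = g $$ (i,l) * Y $$ (l,b)"
    proof cases
      case 1 thus ?thesis using upper_triangularD[OF g(2) 1] g(1) ib by simp
    next
      case 2 thus ?thesis using NmD[OF X, of l b] NmD[OF Y, of l b] l ib by simp
    qed (use agree in simp)
  qed
  also have "\<dots> = (g * Y) $$ (i,b)" using index_mult_mat_sum[OF g(1) Nm_carrier[OF Y] ib] by simp
  finally show ?thesis .
qed

lemma conj_index_eq_if_agree_before:
  fixes g h X Y :: "'a::field mat"
  assumes g: "g \<in> carrier_mat m m" "upper_triangular g"
    and h: "h \<in> carrier_mat m m" "upper_triangular h"
    and X: "X \<in> Nm m" and Y: "Y \<in> Nm m" and ij: "i < m" "j < m"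
    and agree: "\<And>a b. a < b \<Longrightarrow> b < m \<Longrightarrow> bel_less (a,b) (i,j) \<or> (a,b) = (i,j) \<Longrightarrow>
      X $$ (a,b) = Y $$ (a,b)"
  shows "(g * X * h) $$ (i,j) = (g * Y * h) $$ (i,j)"
proof -
  have row: "(g * X) $$ (i,b) = (g * Y) $$ (i,b)" if b: "b < m" "b \<le> j" for b
  proof (rule upper_triangular_mult_index_eq[OF g X Y ij(1) b(1)])
    fix l assume "i \<le> l" "l < b"
    hence "bel_less (l,b) (i,j) \<or> (l,b) = (i,j)" using b unfolding bel_less_def by auto
    thus "X $$ (l,b) = Y $$ (l,b)" using agree \<open>l < b\<close> b by blast
  qed
  have gX: "g * X \<in> carrier_mat m m" "g * Y \<in> carrier_mat m m"
    using g(1) Nm_carrier[OF X] Nm_carrier[OF Y] by auto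
  have "(g * X * h) $$ (i,j) = (\<Sum>b<m. (g * X) $$ (i,b) * h $$ (b,j))"
    using index_mult_mat_sum[OF gX(1) h(1) ij] .
  also have "\<dots> = (\<Sum>b<m. (g * Y) $$ (i,b) * h $$ (b,j))"
  proof (rule sum.cong[OF refl])
    fix b assume b: "b \<in> {..<m}"
    show "(g * X) $$ (i,b) * h $$ (b,j) = (g * Y) $$ (i,b) * h $$ (b,j)"
    proof (cases "b \<le> j")
      case True thus ?thesis using row b by simp
    next
      case False thus ?thesis using upper_triangularD[OF h(2), of j b] h(1) b by simp
    qed
  qed
  also have "\<dots> = (g * Y * h) $$ (i,j)" using index_mult_mat_sum[OF gX(2) h(1) ij] by simp
  finally show ?thesis .
qed

section \<open>Canonical forms via admissible entries\<close>

definition agree_upto :: "nat \<Rightarrow> nat \<Rightarrow> 'a mat \<Rightarrow> 'a mat \<Rightarrow> bool" where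
  "agree_upto m k D X \<longleftrightarrow>
     (\<forall>t<k. D $$ (belitskii_positions m ! t) = X $$ (belitskii_positions m ! t))"

lemma agree_upto_iff_bel_less:
  assumes k: "k < length (belitskii_positions m)"
  shows "agree_upto m k D X \<longleftrightarrow>
    (\<forall>a b. a < b \<and> b < m \<and> bel_less (a,b) (belitskii_positions m ! k) \<longrightarrow> D $$ (a,b) = X $$ (a,b))"
  unfolding agree_upto_def
proof safe
  fix a b assume H: "\<forall>t<k. D $$ (belitskii_positions m ! t) = X $$ (belitskii_positions m ! t)"
    and ab: "a < b" "b < m" "bel_less (a,b) (belitskii_positions m ! k)"
  obtain t where t: "t < length (belitskii_positions m)" "belitskii_positions m ! t = (a,b)"
    using belitskii_positions_index[OF ab(1,2)] .
  have "t < k" using bel_less_belitskii_positions_nth_iff[OF k t(1)] t(2) ab(3) by simp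
  thus "D $$ (a,b) = X $$ (a,b)" using H t(2) by metis
next
  fix t assume H: "\<forall>a b. a < b \<and> b < m \<and> bel_less (a,b) (belitskii_positions m ! k) \<longrightarrow>
      D $$ (a,b) = X $$ (a,b)"
    and tk: "t < k"
  have t: "t < length (belitskii_positions m)" using tk k by simp
  obtain a b where ab: "belitskii_positions m ! t = (a,b)" "a < b" "b < m"
    using belitskii_positions_nth[OF t] .
  have "bel_less (a,b) (belitskii_positions m ! k)"
    using bel_less_belitskii_positions_nth_iff[OF k t] tk ab by simp
  thus "D $$ (belitskii_positions m ! t) = X $$ (belitskii_positions m ! t)" using H ab by simp
qed

lemma agree_upto_conj_by:
  fixes g X Y :: "'a::field mat"
  assumes X: "X \<in> Nm m" and Y: "Y \<in> Nm m" and g: "g \<in> Bm m"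
    and cD: "conj_by m g X D" and cE: "conj_by m g Y E"
    and k: "k \<le> length (belitskii_positions m)" and XY: "agree_upto m k X Y"
  shows "agree_upto m k D E"
  unfolding agree_upto_def
proof (intro allI impI)
  fix t assume tk: "t < k"
  have t: "t < length (belitskii_positions m)" using tk k by simp
  obtain i j where ij: "belitskii_positions m ! t = (i,j)" "i < j" "j < m"
    using belitskii_positions_nth[OF t] .
  obtain h where h: "h \<in> carrier_mat m m" "g * h = 1\<^sub>m m" "h * g = 1\<^sub>m m"
    using Bm_inverse[OF g] by blast
  have D: "D = g * X * h" and E: "E = g * Y * h"
    using cD cE conj_by_iff[OF Bm_carrier[OF g] h] by auto
  have "(g * X * h) $$ (i,j) = (g * Y * h) $$ (i,j)"
  proof (rule conj_index_eq_if_agree_before[OF Bm_carrier[OF g] Bm_upper_triangular[OF g] h(1)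
        Bm_upper_triangular[OF Bm_inverse_Bm[OF g h]] X Y])
    fix a b assume ab: "a < b" "b < m" "bel_less (a,b) (i,j) \<or> (a,b) = (i,j)"
    show "X $$ (a,b) = Y $$ (a,b)"
    proof (cases "(a,b) = (i,j)")
      case True thus ?thesis using XY tk ij(1) unfolding agree_upto_def by metis
    next
      case False
      obtain t' where t': "t' < length (belitskii_positions m)" "belitskii_positions m ! t' = (a,b)"
        using belitskii_positions_index[OF ab(1,2)] .
      have "t' < t" using ab(3) False bel_less_belitskii_positions_nth_iff[OF t t'(1)] t'(2) ij(1) by auto
      thus ?thesis using XY tk t'(2) unfolding agree_upto_def by (metis less_trans)
    qed
  qed (use ij in auto)
  thus "D $$ (belitskii_positions m ! t) = E $$ (belitskii_positions m ! t)" using D E ij by simp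
qed

text \<open>For X = A^(k), stab_upto m k X is the group G^(k) of the algorithm (see
  belitskii_run_invariant); stab_before names the same group by the position instead of its rank
  in the Belitskii order.\<close>

definition stab_upto :: "nat \<Rightarrow> nat \<Rightarrow> 'a::field mat \<Rightarrow> 'a mat set" where
  "stab_upto m k X = {g \<in> Bm m. \<exists>D. conj_by m g X D \<and> agree_upto m k D X}"

definition stab_before :: "nat \<Rightarrow> 'a::field mat \<Rightarrow> nat \<times> nat \<Rightarrow> 'a mat set" where
  "stab_before m X pos = {g \<in> Bm m. \<exists>D. conj_by m g X D \<and>
     (\<forall>a b. a < b \<and> b < m \<and> bel_less (a,b) pos \<longrightarrow> D $$ (a,b) = X $$ (a,b))}"

lemma stab_upto_eq_stab_before:
  "k < length (belitskii_positions m) \<Longrightarrow> stab_upto m k X = stab_before m X (belitskii_positions m ! k)"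
  unfolding stab_upto_def stab_before_def using agree_upto_iff_bel_less by blast

lemma stab_upto_0: "stab_upto m 0 (X :: 'a::field mat) = Bm m"
  using conj_by_exists by (auto simp: stab_upto_def agree_upto_def)

lemma stab_upto_subset_Bm: "stab_upto m k X \<subseteq> Bm m"
  by (auto simp: stab_upto_def)

lemma stab_upto_antimono: "k \<le> l \<Longrightarrow> stab_upto m l X \<subseteq> stab_upto m k X"
  by (auto simp: stab_upto_def agree_upto_def)

lemma one_mat_stab_upto: "X \<in> carrier_mat m m \<Longrightarrow> (1\<^sub>m m :: 'a::field mat) \<in> stab_upto m k X"
  unfolding stab_upto_def agree_upto_def using one_mat_Bm conj_by_one_mat by blast

lemma stab_upto_agree_upto:
  fixes g X :: "'a::field mat"
  assumes "g \<in> stab_upto m k X" "conj_by m g X D"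
  shows "agree_upto m k D X"
  using assms conj_by_unique unfolding stab_upto_def by blast

lemma stab_upto_cong:
  fixes X Y :: "'a::field mat"
  assumes X: "X \<in> Nm m" and Y: "Y \<in> Nm m" and k: "k \<le> length (belitskii_positions m)"
    and XY: "agree_upto m k X Y"
  shows "stab_upto m k X = stab_upto m k Y"
proof -
  have "stab_upto m k X \<subseteq> stab_upto m k Y"
    if X: "X \<in> Nm m" and Y: "Y \<in> Nm m" and XY: "agree_upto m k X Y" for X Y :: "'a mat"
  proof
    fix g assume "g \<in> stab_upto m k X"
    then obtain D where D: "g \<in> Bm m" "conj_by m g X D" "agree_upto m k D X"
      by (auto simp: stab_upto_def)
    obtain E where E: "conj_by m g Y E" using conj_by_exists[OF D(1)] by blast
    have "agree_upto m k D E" using agree_upto_conj_by[OF X Y D(1,2) E k XY] .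
    hence "agree_upto m k E Y" using D(3) XY by (auto simp: agree_upto_def)
    thus "g \<in> stab_upto m k Y" using D(1) E by (auto simp: stab_upto_def)
  qed
  moreover have "agree_upto m k Y X" using XY by (simp add: agree_upto_def)
  ultimately show ?thesis using X Y XY by blast
qed

lemma stab_upto_mult:
  fixes X :: "'a::field mat"
  assumes X: "X \<in> Nm m" and k: "k \<le> length (belitskii_positions m)"
    and g1: "g1 \<in> stab_upto m k X" and g2: "g2 \<in> stab_upto m k X"
  shows "g1 * g2 \<in> stab_upto m k X"
proof -
  obtain D1 where D1: "g1 \<in> Bm m" "conj_by m g1 X D1" "agree_upto m k D1 X"
    using g1 by (auto simp: stab_upto_def)
  obtain D2 where D2: "g2 \<in> Bm m" "conj_by m g2 X D2" "agree_upto m k D2 X"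
    using g2 by (auto simp: stab_upto_def)
  obtain E where E: "conj_by m g1 D2 E" using conj_by_exists[OF D1(1)] by blast
  have "agree_upto m k E D1"
    using agree_upto_conj_by[OF conj_by_Nm[OF D2(1) X D2(2)] X D1(1) E D1(2) k D2(3)] .
  hence "agree_upto m k E X" using D1(3) by (auto simp: agree_upto_def)
  moreover have "conj_by m (g1 * g2) X E" using conj_by_mult[OF Nm_carrier[OF X] D1(1) D2(1) D2(2) E] .
  ultimately show ?thesis using Bm_mult[OF D1(1) D2(1)] by (auto simp: stab_upto_def)
qed

lemma orbit_entriesI:
  assumes "g \<in> G" "conj_by m g X D"
  shows "D $$ pos \<in> orbit_entries m G X pos"
  using assms unfolding orbit_entries_def G_similar_def by blast

lemma orbit_entries_stab_beforeE:
  fixes X :: "'a::field mat"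
  assumes "x \<in> orbit_entries m (stab_before m X pos) X pos"
  obtains g D where "g \<in> Bm m" "conj_by m g X D" "x = D $$ pos"
    "\<And>a b. a < b \<Longrightarrow> b < m \<Longrightarrow> bel_less (a,b) pos \<Longrightarrow> D $$ (a,b) = X $$ (a,b)"
proof -
  obtain g D D' where g: "g \<in> Bm m" and D: "conj_by m g X D" "x = D $$ pos"
    and D': "conj_by m g X D'" "\<forall>a b. a < b \<and> b < m \<and> bel_less (a,b) pos \<longrightarrow> D' $$ (a,b) = X $$ (a,b)"
    using assms unfolding orbit_entries_def G_similar_def stab_before_def by blast
  have "D' = D" using conj_by_unique[OF g D'(1) D(1)] .
  thus ?thesis using that g D D'(2) by blast
qed

text \<open>For c in S this says c = 0 when S is {0} or the whole field and c = 1 when S is the field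
  without 0, as in steps (a) and (b); the weaker form keeps it antimonotone in S.\<close>

definition admissible_entry :: "'a::field set \<Rightarrow> 'a \<Rightarrow> bool" where
  "admissible_entry S c \<longleftrightarrow> (S = UNIV \<longrightarrow> c = 0) \<and> (S = UNIV - {0} \<longrightarrow> c = 0 \<or> c = 1)"

lemma admissible_entry_antimono:
  assumes "S \<subseteq> S'" "admissible_entry S' c"
  shows "admissible_entry S c"
proof -
  have "S' = UNIV - {0} \<or> S' = UNIV" if "S = UNIV - {0}"
    using assms(1) that by (cases "0 \<in> S'") auto
  thus ?thesis using assms unfolding admissible_entry_def by auto
qed

lemma belitskii_step_admissible:
  "belitskii_step m k X G X' G' \<Longrightarrow>
     admissible_entry (orbit_entries m G X (belitskii_positions m ! k)) (X' $$ (belitskii_positions m ! k))"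
  unfolding belitskii_step_def Let_def admissible_entry_def by (auto split: if_splits)

definition belitskii_run :: "nat \<Rightarrow> (nat \<Rightarrow> 'a::field mat) \<Rightarrow> (nat \<Rightarrow> 'a mat set) \<Rightarrow> bool" where
  "belitskii_run m As Gs \<longleftrightarrow> As 0 \<in> Nm m \<and> Gs 0 = Bm m \<and>
     (\<forall>k < length (belitskii_positions m).
        belitskii_step m k (As k) (Gs k) (As (Suc k)) (Gs (Suc k)))"

lemma belitskii_cf_iff_run:
  "belitskii_cf m C \<longleftrightarrow> (\<exists>As Gs. belitskii_run m As Gs \<and> C = As (length (belitskii_positions m)))"
  unfolding belitskii_cf_def belitskii_cf_of_def belitskii_run_def by blast

lemma belitskii_cf_if_admissible:
  fixes C :: "'a::field mat"
  assumes C: "C \<in> Nm m"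
    and adm: "\<And>i j. i < j \<Longrightarrow> j < m \<Longrightarrow>
       admissible_entry (orbit_entries m (stab_before m C (i,j)) C (i,j)) (C $$ (i,j))"
  shows "belitskii_cf m C"
proof -
  let ?ps = "belitskii_positions m"
  have Cc: "C \<in> carrier_mat m m" using Nm_carrier[OF C] .
  have "belitskii_step m k C (stab_upto m k C) C (stab_upto m (Suc k) C)"
    if k: "k < length ?ps" for k
  proof -
    let ?S = "orbit_entries m (stab_upto m k C) C (?ps ! k)"
    have "admissible_entry ?S (C $$ (?ps ! k))"
      using adm stab_upto_eq_stab_before[OF k] belitskii_positions_nth[OF k] by metis
    moreover have "C $$ (?ps ! k) \<in> ?S"
      using orbit_entriesI[OF one_mat_stab_upto[OF Cc] conj_by_one_mat[OF Cc]] .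
    moreover have "G_similar m (stab_upto m k C) C C"
      unfolding G_similar_def using one_mat_stab_upto[OF Cc] conj_by_one_mat[OF Cc] by blast
    moreover have "stab_upto m (Suc k) C = {g \<in> stab_upto m k C. \<exists>D. conj_by m g C D \<and>
        (\<forall>t\<le>k. D $$ (?ps ! t) = C $$ (?ps ! t))}"
      unfolding stab_upto_def agree_upto_def by (auto simp: less_Suc_eq_le)
    ultimately show ?thesis
      unfolding belitskii_step_def Let_def admissible_entry_def by auto
  qed
  hence "belitskii_run m (\<lambda>_. C) (\<lambda>k. stab_upto m k C)"
    unfolding belitskii_run_def using C stab_upto_0 by blast
  thus ?thesis unfolding belitskii_cf_iff_run by blast
qed

lemma belitskii_step_stab_upto:
  fixes X :: "'a::field mat"
  assumes X: "X \<in> Nm m" and k: "k < length (belitskii_positions m)"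
    and step: "belitskii_step m k X (stab_upto m k X) X' G'"
  shows "X' = X \<or> (\<exists>g \<in> stab_upto m k X. conj_by m g X X')"
    and "X' \<in> Nm m" and "G' = stab_upto m (Suc k) X'"
proof -
  let ?ps = "belitskii_positions m"
  have moved: "X' = X \<or> G_similar m (stab_upto m k X) X X'"
    and G': "G' = {g \<in> stab_upto m k X. \<exists>C. conj_by m g X' C \<and> (\<forall>t\<le>k. C $$ (?ps ! t) = X' $$ (?ps ! t))}"
    using step unfolding belitskii_step_def Let_def by (auto split: if_splits)
  show conj: "X' = X \<or> (\<exists>g \<in> stab_upto m k X. conj_by m g X X')"
    using moved unfolding G_similar_def by blast
  show N: "X' \<in> Nm m" using conj X conj_by_Nm stab_upto_subset_Bm by blast
  have "agree_upto m k X X'" using conj stab_upto_agree_upto by (metis agree_upto_def)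
  hence "stab_upto m k X = stab_upto m k X'" using stab_upto_cong[OF X N] k by simp
  hence "G' = stab_upto m k X' \<inter> stab_upto m (Suc k) X'"
    unfolding G' stab_upto_def agree_upto_def by (auto simp: less_Suc_eq_le)
  thus "G' = stab_upto m (Suc k) X'" using stab_upto_antimono[of k "Suc k" m X'] by auto
qed

lemma belitskii_run_invariant:
  fixes As :: "nat \<Rightarrow> 'a::field mat"
  assumes run: "belitskii_run m As Gs" and l: "l \<le> length (belitskii_positions m)"
  shows "As l \<in> Nm m \<and> Gs l = stab_upto m l (As l)"
  using l
proof (induction l)
  case 0 thus ?case using run stab_upto_0 unfolding belitskii_run_def by metis
next
  case (Suc l)
  hence l: "l < length (belitskii_positions m)" by simp
  have "belitskii_step m l (As l) (Gs l) (As (Suc l)) (Gs (Suc l))"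
    using run l unfolding belitskii_run_def by simp
  moreover have "As l \<in> Nm m" "Gs l = stab_upto m l (As l)" using Suc by simp_all
  ultimately show ?case using belitskii_step_stab_upto(2,3)[OF _ l] by metis
qed

lemma belitskii_run_conj:
  fixes As :: "nat \<Rightarrow> 'a::field mat"
  assumes run: "belitskii_run m As Gs" and "k \<le> l" "l \<le> length (belitskii_positions m)"
  shows "\<exists>\<gamma> \<in> stab_upto m k (As k). conj_by m \<gamma> (As k) (As l)"
  using assms(2,3)
proof (induction l)
  case 0
  thus ?case using belitskii_run_invariant[OF run, of 0]
      one_mat_stab_upto[OF Nm_carrier] conj_by_one_mat[OF Nm_carrier] by blast
next
  case (Suc l)
  note inv = belitskii_run_invariant[OF run]
  show ?case
  proof (cases "k = Suc l")
    case True
    thus ?thesis using inv[OF Suc.prems(2)] one_mat_stab_upto[OF Nm_carrier] conj_by_one_mat[OF Nm_carrier]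
      by blast
  next
    case False
    hence kl: "k \<le> l" "l < length (belitskii_positions m)" using Suc.prems by auto
    obtain \<gamma> where \<gamma>: "\<gamma> \<in> stab_upto m k (As k)" "conj_by m \<gamma> (As k) (As l)" using Suc.IH kl by auto
    have Nl: "As l \<in> Nm m" and Nk: "As k \<in> Nm m" using inv kl by auto
    have "belitskii_step m l (As l) (Gs l) (As (Suc l)) (Gs (Suc l))"
      using run kl unfolding belitskii_run_def by simp
    with inv[of l] kl have "belitskii_step m l (As l) (stab_upto m l (As l)) (As (Suc l)) (Gs (Suc l))"
      by simp
    from belitskii_step_stab_upto(1)[OF Nl kl(2) this] show ?thesis
    proof
      assume "As (Suc l) = As l" thus ?thesis using \<gamma> by auto
    next
      assume "\<exists>g\<in>stab_upto m l (As l). conj_by m g (As l) (As (Suc l))"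
      then obtain g where g: "g \<in> stab_upto m l (As l)" "conj_by m g (As l) (As (Suc l))" by blast
      have "stab_upto m k (As l) = stab_upto m k (As k)"
        using stab_upto_cong[OF Nl Nk _ stab_upto_agree_upto[OF \<gamma>]] kl by simp
      hence gk: "g \<in> stab_upto m k (As k)" using g(1) stab_upto_antimono[OF kl(1)] by blast
      have "g * \<gamma> \<in> stab_upto m k (As k)" using stab_upto_mult[OF Nk _ gk \<gamma>(1)] kl by simp
      moreover have "conj_by m (g * \<gamma>) (As k) (As (Suc l))"
        using conj_by_mult[OF Nm_carrier[OF Nk] _ _ \<gamma>(2) g(2)] gk \<gamma>(1) stab_upto_subset_Bm by blast
      ultimately show ?thesis by blast
    qed
  qed
qed

lemma belitskii_cf_admissible:
  fixes C :: "'a::field mat"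
  assumes cf: "belitskii_cf m C" and k: "k < length (belitskii_positions m)"
  shows "admissible_entry (orbit_entries m (stab_upto m k C) C (belitskii_positions m ! k))
           (C $$ (belitskii_positions m ! k))"
proof -
  let ?N = "length (belitskii_positions m)" and ?pos = "belitskii_positions m ! k"
  obtain As Gs where run: "belitskii_run m As Gs" and C: "C = As ?N"
    using cf unfolding belitskii_cf_iff_run by blast
  note inv = belitskii_run_invariant[OF run]
  have NX: "As k \<in> Nm m" and GX: "Gs k = stab_upto m k (As k)" using inv k by auto
  have NC: "C \<in> Nm m" using inv[of ?N] C by simp
  obtain \<gamma> where \<gamma>: "\<gamma> \<in> stab_upto m k (As k)" "conj_by m \<gamma> (As k) C"
    using belitskii_run_conj[OF run, of k ?N] k C by auto
  have stab: "stab_upto m k C = stab_upto m k (As k)"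
    using stab_upto_cong[OF NC NX _ stab_upto_agree_upto[OF \<gamma>]] k by simp
  obtain \<gamma>' where "\<gamma>' \<in> stab_upto m (Suc k) (As (Suc k))" "conj_by m \<gamma>' (As (Suc k)) C"
    using belitskii_run_conj[OF run, of "Suc k" ?N] k C by auto
  hence C_pos: "C $$ ?pos = As (Suc k) $$ ?pos" using stab_upto_agree_upto by (force simp: agree_upto_def)
  have "orbit_entries m (stab_upto m k C) C ?pos \<subseteq> orbit_entries m (stab_upto m k (As k)) (As k) ?pos"
  proof
    fix x assume "x \<in> orbit_entries m (stab_upto m k C) C ?pos"
    then obtain g E where gE: "g \<in> stab_upto m k (As k)" "conj_by m g C E" "x = E $$ ?pos"
      unfolding orbit_entries_def G_similar_def stab by blast
    have "g * \<gamma> \<in> stab_upto m k (As k)" using stab_upto_mult[OF NX _ gE(1) \<gamma>(1)] k by simp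
    moreover have "conj_by m (g * \<gamma>) (As k) E"
      using conj_by_mult[OF Nm_carrier[OF NX] _ _ \<gamma>(2) gE(2)] gE(1) \<gamma>(1) stab_upto_subset_Bm by blast
    ultimately show "x \<in> orbit_entries m (stab_upto m k (As k)) (As k) ?pos"
      using gE(3) orbit_entriesI by metis
  qed
  moreover have "admissible_entry (orbit_entries m (Gs k) (As k) ?pos) (As (Suc k) $$ ?pos)"
    using belitskii_step_admissible run k unfolding belitskii_run_def by blast
  ultimately show ?thesis using admissible_entry_antimono GX C_pos by metis
qed

theorem belitskii_cf_iff_admissible:
  fixes C :: "'a::field mat"
  shows "belitskii_cf m C \<longleftrightarrow> C \<in> Nm m \<and> (\<forall>i j. i < j \<longrightarrow> j < m \<longrightarrow>
    admissible_entry (orbit_entries m (stab_before m C (i,j)) C (i,j)) (C $$ (i,j)))"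
proof (intro iffI conjI allI impI)
  assume cf: "belitskii_cf m C"
  then obtain As Gs where "belitskii_run m As Gs" "C = As (length (belitskii_positions m))"
    unfolding belitskii_cf_iff_run by blast
  thus "C \<in> Nm m" using belitskii_run_invariant by blast
  fix i j assume "i < j" "j < m"
  then obtain t where t: "t < length (belitskii_positions m)" "belitskii_positions m ! t = (i,j)"
    using belitskii_positions_index by blast
  show "admissible_entry (orbit_entries m (stab_before m C (i,j)) C (i,j)) (C $$ (i,j))"
    using belitskii_cf_admissible[OF cf t(1)] unfolding stab_upto_eq_stab_before[OF t(1)] t(2) .
qed (use belitskii_cf_if_admissible in blast)

section \<open>Diagonal blocks\<close>

definition diag_block :: "nat \<Rightarrow> nat \<Rightarrow> 'a mat \<Rightarrow> 'a mat" where
  "diag_block s r X = mat r r (\<lambda>(a,b). X $$ (s + a, s + b))"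

lemma diag_block_carrier[simp]: "diag_block s r X \<in> carrier_mat r r"
  by (simp add: diag_block_def)

lemma dim_diag_block[simp]: "dim_row (diag_block s r X) = r" "dim_col (diag_block s r X) = r"
  by (simp_all add: diag_block_def)

lemma index_diag_block[simp]: "a < r \<Longrightarrow> b < r \<Longrightarrow> diag_block s r X $$ (a,b) = X $$ (s + a, s + b)"
  by (simp add: diag_block_def)

lemma sum_lessThan_eq_shifted:
  fixes f :: "nat \<Rightarrow> 'a::comm_monoid_add"
  assumes "s + r \<le> n" "\<And>b. b < n \<Longrightarrow> b < s \<or> s + r \<le> b \<Longrightarrow> f b = 0"
  shows "(\<Sum>b<n. f b) = (\<Sum>b<r. f (s + b))"
proof -
  have "(\<Sum>b<n. f b) = (\<Sum>b\<in>{s..<s+r}. f b)"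
    by (rule sum.mono_neutral_right) (use assms in auto)
  also have "\<dots> = (\<Sum>b<r. f (s + b))"
    by (induction r) auto
  finally show ?thesis .
qed

lemma diag_block_mult:
  fixes g h :: "'a::field mat"
  assumes g: "g \<in> carrier_mat n n" "upper_triangular g"
    and h: "h \<in> carrier_mat n n" "upper_triangular h" and s: "s + r \<le> n"
  shows "diag_block s r (g * h) = diag_block s r g * diag_block s r h"
proof (rule eq_matI)
  fix i j assume "i < dim_row (diag_block s r g * diag_block s r h)"
    "j < dim_col (diag_block s r g * diag_block s r h)"
  hence ij: "i < r" "j < r" by auto
  have "(g * h) $$ (s + i, s + j) = (\<Sum>b<n. g $$ (s + i, b) * h $$ (b, s + j))"
    using index_mult_mat_sum[OF g(1) h(1)] s ij by simp
  also have "\<dots> = (\<Sum>b<r. g $$ (s + i, s + b) * h $$ (s + b, s + j))"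
  proof (rule sum_lessThan_eq_shifted[OF s])
    fix b assume b: "b < n" "b < s \<or> s + r \<le> b"
    from b(2) show "g $$ (s + i, b) * h $$ (b, s + j) = 0"
    proof
      assume "b < s"
      thus ?thesis using upper_triangularD[OF g(2), of b "s + i"] g(1) s ij by simp
    next
      assume "s + r \<le> b"
      thus ?thesis using upper_triangularD[OF h(2), of "s + j" b] h(1) b ij by simp
    qed
  qed
  also have "\<dots> = (diag_block s r g * diag_block s r h) $$ (i,j)"
    using index_mult_mat_sum[of "diag_block s r g" r r "diag_block s r h" r] ij by simp
  finally show "diag_block s r (g * h) $$ (i,j) = (diag_block s r g * diag_block s r h) $$ (i,j)"
    using ij by simp
qed auto

lemma diag_block_upper_triangular:
  assumes "g \<in> carrier_mat n n" "upper_triangular g" "s + r \<le> n"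
  shows "upper_triangular (diag_block s r g)"
  using assms upper_triangularD[OF assms(2)] by (intro upper_triangularI) auto

lemma diag_block_Bm:
  fixes g h :: "'a::field mat"
  assumes g: "g \<in> Bm n" and h: "h \<in> carrier_mat n n" "g * h = 1\<^sub>m n" "h * g = 1\<^sub>m n"
    and s: "s + r \<le> n"
  shows "diag_block s r g \<in> Bm r" "diag_block s r g * diag_block s r h = 1\<^sub>m r"
    "diag_block s r h * diag_block s r g = 1\<^sub>m r"
proof -
  have hB: "h \<in> Bm n" using Bm_inverse_Bm[OF g h] .
  note gg = Bm_carrier[OF g] Bm_upper_triangular[OF g]
    and hh = Bm_carrier[OF hB] Bm_upper_triangular[OF hB]
  have "diag_block s r (1\<^sub>m n) = (1\<^sub>m r :: 'a mat)" using s by (intro eq_matI) auto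
  thus gh: "diag_block s r g * diag_block s r h = 1\<^sub>m r"
    and hg: "diag_block s r h * diag_block s r g = 1\<^sub>m r"
    using diag_block_mult[OF gg hh s] diag_block_mult[OF hh gg s] h by simp_all
  show "diag_block s r g \<in> Bm r"
    using BmI[OF diag_block_carrier diag_block_upper_triangular[OF gg s] diag_block_carrier gh hg] .
qed

lemma orbit_entries_stab_before_diag_block:
  fixes X :: "'a::field mat"
  assumes X: "X \<in> Nm n" and s: "s + r \<le> n" and ij: "i < j" "j < r"
  shows "orbit_entries n (stab_before n X (s + i, s + j)) X (s + i, s + j)
     \<subseteq> orbit_entries r (stab_before r (diag_block s r X) (i,j)) (diag_block s r X) (i,j)"
proof
  fix x assume "x \<in> orbit_entries n (stab_before n X (s + i, s + j)) X (s + i, s + j)"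
  then obtain g D where g: "g \<in> Bm n" and D: "conj_by n g X D" and x: "x = D $$ (s + i, s + j)"
    and fixed: "\<And>a b. a < b \<Longrightarrow> b < n \<Longrightarrow> bel_less (a,b) (s + i, s + j) \<Longrightarrow> D $$ (a,b) = X $$ (a,b)"
    by (rule orbit_entries_stab_beforeE) blast
  obtain h where h: "h \<in> carrier_mat n n" "g * h = 1\<^sub>m n" "h * g = 1\<^sub>m n"
    using Bm_inverse[OF g] by blast
  note gg = Bm_carrier[OF g] Bm_upper_triangular[OF g]
  have hu: "upper_triangular h" using Bm_upper_triangular[OF Bm_inverse_Bm[OF g h]] .
  have gX: "g * X \<in> carrier_mat n n" "upper_triangular (g * X)"
    using upper_triangular_mult_Nm[OF gg X] Nm_carrier Nm_upper_triangular by auto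
  note bB = diag_block_Bm[OF g h s]
  let ?D = "diag_block s r g * diag_block s r X * diag_block s r h"
  have "D = g * X * h" using D conj_by_iff[OF gg(1) h] by simp
  hence D_block: "diag_block s r D = ?D"
    using diag_block_mult[OF gX h(1) hu s] diag_block_mult[OF gg Nm_carrier[OF X] Nm_upper_triangular[OF X] s]
    by simp
  have conj: "conj_by r (diag_block s r g) (diag_block s r X) ?D"
    using conj_by_iff[OF Bm_carrier[OF bB(1)] diag_block_carrier bB(2,3)] by simp
  have "diag_block s r g \<in> stab_before r (diag_block s r X) (i,j)"
    unfolding stab_before_def
  proof (intro CollectI conjI exI[of _ ?D] bB(1) conj allI impI)
    fix a b assume ab: "a < b \<and> b < r \<and> bel_less (a, b) (i, j)"
    have "bel_less (s + a, s + b) (s + i, s + j)" using ab by (auto simp: bel_less_def)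
    thus "?D $$ (a,b) = diag_block s r X $$ (a,b)"
      using fixed[of "s + a" "s + b"] ab s arg_cong[OF D_block, of "\<lambda>M. M $$ (a,b)"] by simp
  qed
  moreover have "x = ?D $$ (i,j)" using x ij arg_cong[OF D_block, of "\<lambda>M. M $$ (i,j)"] by simp
  ultimately show "x \<in> orbit_entries r (stab_before r (diag_block s r X) (i,j)) (diag_block s r X) (i,j)"
    using orbit_entriesI conj by metis
qed

lemma admissible_entry_diag_block:
  fixes X :: "'a::field mat"
  assumes X: "X \<in> Nm n" and s: "s + r \<le> n" and ij: "i < j" "j < r"
    and cf: "belitskii_cf r (diag_block s r X)"
  shows "admissible_entry (orbit_entries n (stab_before n X (s + i, s + j)) X (s + i, s + j))
    (X $$ (s + i, s + j))"
  using admissible_entry_antimono[OF orbit_entries_stab_before_diag_block[OF X s ij]]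
    cf ij unfolding belitskii_cf_iff_admissible by auto

section \<open>Subpermutations and pivots\<close>

lemma subperm_01: "subperm Q \<Longrightarrow> i < dim_row Q \<Longrightarrow> j < dim_col Q \<Longrightarrow> Q $$ (i,j) = 0 \<or> Q $$ (i,j) = 1"
  unfolding subperm_def by blast

lemma subperm_row_unique:
  "subperm Q \<Longrightarrow> i < dim_row Q \<Longrightarrow> j < dim_col Q \<Longrightarrow> j' < dim_col Q \<Longrightarrow>
     Q $$ (i,j) \<noteq> 0 \<Longrightarrow> Q $$ (i,j') \<noteq> 0 \<Longrightarrow> j = j'"
  unfolding subperm_def by blast

lemma subperm_col_unique:
  "subperm Q \<Longrightarrow> i < dim_row Q \<Longrightarrow> i' < dim_row Q \<Longrightarrow> j < dim_col Q \<Longrightarrow>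
     Q $$ (i,j) \<noteq> 0 \<Longrightarrow> Q $$ (i',j) \<noteq> 0 \<Longrightarrow> i = i'"
  unfolding subperm_def by blast

definition pivot_pattern :: "nat \<Rightarrow> 'a::field mat \<Rightarrow> 'a mat \<Rightarrow> bool" where
  "pivot_pattern n Q M \<longleftrightarrow>
     (\<forall>a<n. \<forall>c<n. Q $$ (a,c) \<noteq> 0 \<longrightarrow> M $$ (a,c) = 1 \<and> (\<forall>b<c. M $$ (a,b) = 0)) \<and>
     (\<forall>a<n. (\<forall>c<n. Q $$ (a,c) = 0) \<longrightarrow> (\<forall>b<n. M $$ (a,b) = 0))"

lemma pivot_pattern_mult_Um:
  fixes Q U :: "'a::field mat"
  assumes Q: "Q \<in> carrier_mat n n" "subperm Q" and U: "U \<in> Um n"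
  shows "pivot_pattern n Q (Q * U)"
proof -
  have Uc: "U \<in> carrier_mat n n" and U_diag: "\<And>c. c < n \<Longrightarrow> U $$ (c,c) = 1"
    and U_lower: "\<And>b c. b < c \<Longrightarrow> c < n \<Longrightarrow> U $$ (c,b) = 0"
    using U unfolding Um_def by auto
  have row_pivot: "(Q * U) $$ (a,b) = U $$ (c,b)"
    if "a < n" "b < n" "c < n" "Q $$ (a,c) \<noteq> 0" for a b c
  proof -
    have "(Q * U) $$ (a,b) = (\<Sum>k<n. Q $$ (a,k) * U $$ (k,b))"
      using index_mult_mat_sum[OF Q(1) Uc] that by simp
    also have "\<dots> = Q $$ (a,c) * U $$ (c,b)"
      using subperm_row_unique[OF Q(2)] Q(1) that by (intro sum_eq_single) auto
    finally show ?thesis using subperm_01[OF Q(2)] Q(1) that by auto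
  qed
  have "(Q * U) $$ (a,b) = 0" if "a < n" "b < n" "\<forall>c<n. Q $$ (a,c) = 0" for a b
    using index_mult_mat_sum[OF Q(1) Uc] that by simp
  thus ?thesis unfolding pivot_pattern_def using row_pivot U_diag U_lower by auto
qed

context
  fixes A1 A2 Q1 Q2 Q12 :: "'a::field mat" and p q :: nat
  assumes carrier: "A1 \<in> carrier_mat p p" "A2 \<in> carrier_mat q q"
    "Q1 \<in> carrier_mat p p" "Q2 \<in> carrier_mat q q" "Q12 \<in> carrier_mat p q"
    and pivot_blocks: "pivot_pattern p Q1 A1" "pivot_pattern q Q2 A2"
    and subperm_blocks: "subperm (four_block_mat Q1 Q12 (0\<^sub>m q p) Q2)"
begin

private lemma index_Q:
  "a < p + q \<Longrightarrow> c < p + q \<Longrightarrow> four_block_mat Q1 Q12 (0\<^sub>m q p) Q2 $$ (a,c) =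
    (if a < p then if c < p then Q1 $$ (a,c) else Q12 $$ (a, c - p)
     else if c < p then 0 else Q2 $$ (a - p, c - p))"
  using carrier by simp

private lemma index_M:
  "a < p + q \<Longrightarrow> c < p + q \<Longrightarrow> four_block_mat A1 Q12 (0\<^sub>m q p) A2 $$ (a,c) =
    (if a < p then if c < p then A1 $$ (a,c) else Q12 $$ (a, c - p)
     else if c < p then 0 else A2 $$ (a - p, c - p))"
  using carrier by simp

private lemma pivot_row_upper_right:
  assumes ac: "a < p" "p \<le> c" "c < p + q" "four_block_mat Q1 Q12 (0\<^sub>m q p) Q2 $$ (a,c) \<noteq> 0"
  shows "four_block_mat A1 Q12 (0\<^sub>m q p) A2 $$ (a,c) = 1"
    and "b < c \<Longrightarrow> four_block_mat A1 Q12 (0\<^sub>m q p) A2 $$ (a,b) = 0"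
proof -
  let ?Q = "four_block_mat Q1 Q12 (0\<^sub>m q p) Q2"
  have Qc: "?Q \<in> carrier_mat (p + q) (p + q)" using carrier by auto
  note row_unique = subperm_row_unique[OF subperm_blocks, unfolded carrier_matD[OF Qc]]
  have "Q1 $$ (a,k) = 0" if "k < p" for k
    using row_unique[of a c k] index_Q[of a k] ac that by (cases "Q1 $$ (a,k) = 0") auto
  hence "A1 $$ (a,b) = 0" if "b < p" for b
    using pivot_blocks(1) ac(1) that unfolding pivot_pattern_def by blast
  moreover have "?Q $$ (a,b) = 0" if "p \<le> b" "b < c" for b
    using row_unique[of a c b] ac that by auto
  ultimately show "b < c \<Longrightarrow> four_block_mat A1 Q12 (0\<^sub>m q p) A2 $$ (a,b) = 0"
    using index_M[of a b] index_Q[of a b] ac by (cases "b < p") auto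
  show "four_block_mat A1 Q12 (0\<^sub>m q p) A2 $$ (a,c) = 1"
    using subperm_01[OF subperm_blocks, of a c] index_M[of a c] index_Q[of a c] carrier ac by auto
qed

private lemma pivot_row:
  assumes ac: "a < p + q" "c < p + q" "four_block_mat Q1 Q12 (0\<^sub>m q p) Q2 $$ (a,c) \<noteq> 0"
  shows "four_block_mat A1 Q12 (0\<^sub>m q p) A2 $$ (a,c) = 1 \<and>
    (\<forall>b<c. four_block_mat A1 Q12 (0\<^sub>m q p) A2 $$ (a,b) = 0)"
proof -
  note piv1 = pivot_blocks(1)[unfolded pivot_pattern_def]
  consider "a < p" "c < p" | "a < p" "p \<le> c" | "p \<le> a" "p \<le> c"
    using ac index_Q by fastforce
  thus ?thesis
  proof cases
    case 1 thus ?thesis using piv1 ac index_M index_Q by auto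
  next
    case 2 thus ?thesis using pivot_row_upper_right ac by blast
  next
    case 3
    have "Q2 $$ (a - p, c - p) \<noteq> 0" "a - p < q" "c - p < q" using index_Q[OF ac(1,2)] ac 3 by auto
    hence A2: "A2 $$ (a - p, c - p) = 1" "\<forall>b<c - p. A2 $$ (a - p, b) = 0"
      using pivot_blocks(2) unfolding pivot_pattern_def by blast+
    have "four_block_mat A1 Q12 (0\<^sub>m q p) A2 $$ (a,b) = 0" if "b < c" for b
      using A2(2) index_M[of a b] ac 3 that by (cases "b < p") auto
    thus ?thesis using A2(1) index_M[OF ac(1,2)] 3 by auto
  qed
qed

private lemma zero_row:
  assumes ab: "a < p + q" "b < p + q" "\<forall>c<p + q. four_block_mat Q1 Q12 (0\<^sub>m q p) Q2 $$ (a,c) = 0"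
  shows "four_block_mat A1 Q12 (0\<^sub>m q p) A2 $$ (a,b) = 0"
proof (cases "a < p")
  case True
  have "\<forall>c<p. Q1 $$ (a,c) = 0" using ab(3) index_Q True by (metis trans_less_add1)
  hence "\<forall>b<p. A1 $$ (a,b) = 0" using pivot_blocks(1) True unfolding pivot_pattern_def by blast
  thus ?thesis using index_M[OF ab(1,2)] index_Q[OF ab(1,2)] ab True by auto
next
  case False
  have "Q2 $$ (a - p,c) = 0" if "c < q" for c
    using ab(3) index_Q[OF ab(1), of "p + c"] False that by simp
  hence "\<forall>b<q. A2 $$ (a - p,b) = 0" using pivot_blocks(2) False ab(1) unfolding pivot_pattern_def by auto
  thus ?thesis using index_M[OF ab(1,2)] False ab by auto
qed

lemma pivot_pattern_four_block_mat:
  "pivot_pattern (p + q) (four_block_mat Q1 Q12 (0\<^sub>m q p) Q2) (four_block_mat A1 Q12 (0\<^sub>m q p) A2)"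
  unfolding pivot_pattern_def using pivot_row zero_row by blast

end

lemma pivot_pattern_zero_before_pivot:
  assumes "pivot_pattern n Q M" "a < n" "c < n" "\<And>c'. c' \<le> c \<Longrightarrow> Q $$ (a,c') = 0"
  shows "M $$ (a,c) = 0"
proof (cases "\<forall>c'<n. Q $$ (a,c') = 0")
  case False
  then obtain c' where "c' < n" "Q $$ (a,c') \<noteq> 0" by blast
  moreover have "c < c'" using assms(4) calculation(2) by (meson not_le)
  ultimately show ?thesis using assms unfolding pivot_pattern_def by blast
qed (use assms in \<open>auto simp: pivot_pattern_def\<close>)

lemma upper_triangular_mult_leftmost_pivot:
  fixes g M Q :: "'a::field mat"
  assumes g: "g \<in> carrier_mat n n" "upper_triangular g" and M: "M \<in> carrier_mat n n"
    and Q: "Q \<in> carrier_mat n n" "subperm Q" and piv: "pivot_pattern n Q M"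
    and a0: "i \<le> a0" "a0 < n" "c0 < n" "Q $$ (a0,c0) \<noteq> 0"
    and leftmost: "\<And>a c. i \<le> a \<Longrightarrow> a < n \<Longrightarrow> c < n \<Longrightarrow> g $$ (i,a) \<noteq> 0 \<Longrightarrow> Q $$ (a,c) \<noteq> 0 \<Longrightarrow> c0 \<le> c"
  shows "(g * M) $$ (i,c0) = g $$ (i,a0)"
proof -
  have "(g * M) $$ (i,c0) = (\<Sum>a<n. g $$ (i,a) * M $$ (a,c0))"
    using index_mult_mat_sum[OF g(1) M] a0 by simp
  also have "\<dots> = g $$ (i,a0) * M $$ (a0,c0)"
  proof (rule sum_eq_single)
    fix a assume a: "a \<in> {..<n}" "a \<noteq> a0"
    show "g $$ (i,a) * M $$ (a,c0) = 0"
    proof (cases "i \<le> a \<and> g $$ (i,a) \<noteq> 0")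
      case True
      have "Q $$ (a,c) = 0" if "c \<le> c0" for c
      proof (rule ccontr)
        assume "Q $$ (a,c) \<noteq> 0"
        hence "c = c0" using leftmost[of a c] True a that a0 by simp
        thus False using subperm_col_unique[OF Q(2), of a a0 c0] Q(1) a a0 \<open>Q $$ (a,c) \<noteq> 0\<close> by auto
      qed
      thus ?thesis using pivot_pattern_zero_before_pivot[OF piv _ a0(3)] a by simp
    next
      case False
      thus ?thesis using upper_triangularD[OF g(2), of a i] g(1) a0 by auto
    qed
  qed (use a0 in auto)
  also have "\<dots> = g $$ (i,a0)" using piv a0 unfolding pivot_pattern_def by simp
  finally show ?thesis .
qed

lemma conj_mult_row_zero_at_pivot:
  fixes M Q g D :: "'a::field mat"
  assumes M: "M \<in> Nm n" and piv: "pivot_pattern n Q M" and ij: "i < j" "j < n" and Qij: "Q $$ (i,j) \<noteq> 0"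
    and g: "g \<in> Bm n" and D: "conj_by n g M D" and Dij: "D $$ (i,j) = 0"
    and fixed: "\<And>a b. a < b \<Longrightarrow> b < n \<Longrightarrow> bel_less (a,b) (i,j) \<Longrightarrow> D $$ (a,b) = M $$ (a,b)"
    and b: "b \<le> j"
  shows "(g * M) $$ (i,b) = 0"
proof -
  note gc = Bm_carrier[OF g] and gu = Bm_upper_triangular[OF g]
  obtain h where h: "h \<in> carrier_mat n n" "g * h = 1\<^sub>m n" "h * g = 1\<^sub>m n"
    using Bm_inverse[OF g] by blast
  have Mc: "M \<in> carrier_mat n n" using Nm_carrier[OF M] .
  have DN: "D \<in> Nm n" using conj_by_Nm[OF g M D] .
  have "D * g = g * M * (h * g)"
    using D conj_by_iff[OF gc h] gc Mc h(1) by (simp add: assoc_mult_mat[of _ n n _ n _ n])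
  hence Dg: "D * g = g * M" using gc Mc h(3) by simp
  have D_row: "D $$ (i,c) = 0" if "c \<le> j" for c
  proof -
    consider "c \<le> i" | "i < c" "c < j" | "c = j" using \<open>c \<le> j\<close> by linarith
    thus ?thesis
    proof cases
      case 2
      hence "D $$ (i,c) = M $$ (i,c)" using fixed[of i c] ij by (simp add: bel_less_def)
      thus ?thesis using piv Qij ij 2 unfolding pivot_pattern_def by auto
    qed (use NmD[OF DN] ij Dij in auto)
  qed
  have "(g * M) $$ (i,b) = (\<Sum>c<n. D $$ (i,c) * g $$ (c,b))"
    using Dg[symmetric] index_mult_mat_sum[OF Nm_carrier[OF DN] gc] ij b by simp
  also have "\<dots> = 0"
  proof (rule sum.neutral, intro ballI)
    fix c assume c: "c \<in> {..<n}"
    show "D $$ (i,c) * g $$ (c,b) = 0"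
    proof (cases "c \<le> b")
      case True thus ?thesis using D_row[of c] b by simp
    next
      case False thus ?thesis using upper_triangularD[OF gu, of b c] gc c by simp
    qed
  qed
  finally show ?thesis .
qed

lemma zero_notin_orbit_entries_at_pivot:
  fixes M Q :: "'a::field mat"
  assumes M: "M \<in> Nm n" and Q: "Q \<in> carrier_mat n n" "subperm Q" and piv: "pivot_pattern n Q M"
    and ij: "i < j" "j < n" and Qij: "Q $$ (i,j) \<noteq> 0"
  shows "0 \<notin> orbit_entries n (stab_before n M (i,j)) M (i,j)"
proof
  assume "0 \<in> orbit_entries n (stab_before n M (i,j)) M (i,j)"
  then obtain g D where g: "g \<in> Bm n" and D: "conj_by n g M D" and Dij: "0 = D $$ (i,j)"
    and fixed: "\<And>a b. a < b \<Longrightarrow> b < n \<Longrightarrow> bel_less (a,b) (i,j) \<Longrightarrow> D $$ (a,b) = M $$ (a,b)"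
    by (rule orbit_entries_stab_beforeE) blast
  have gM_row: "(g * M) $$ (i,b) = 0" if "b \<le> j" for b
    using conj_mult_row_zero_at_pivot[OF M piv ij Qij g D Dij[symmetric] _ that] fixed by blast
  define P where "P = {c. c < n \<and> (\<exists>a. i \<le> a \<and> a < n \<and> g $$ (i,a) \<noteq> 0 \<and> Q $$ (a,c) \<noteq> 0)}"
  have finite: "finite P" unfolding P_def by simp
  have "j \<in> P" unfolding P_def using ij Qij Bm_diag_nonzero[OF g, of i] by auto
  hence "Min P \<in> P" "Min P \<le> j" using Min_in[OF finite] Min_le[OF finite] by auto
  then obtain a0 where a0: "i \<le> a0" "a0 < n" "g $$ (i,a0) \<noteq> 0" "Q $$ (a0, Min P) \<noteq> 0" "Min P < n"
    unfolding P_def by blast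
  have "(g * M) $$ (i, Min P) = g $$ (i,a0)"
  proof (rule upper_triangular_mult_leftmost_pivot[OF Bm_carrier[OF g] Bm_upper_triangular[OF g]
        Nm_carrier[OF M] Q piv a0(1,2,5,4)])
    fix a c assume "i \<le> a" "a < n" "c < n" "g $$ (i,a) \<noteq> 0" "Q $$ (a,c) \<noteq> 0"
    hence "c \<in> P" unfolding P_def by blast
    thus "Min P \<le> c" using Min_le[OF finite] by blast
  qed
  thus False using gM_row[OF \<open>Min P \<le> j\<close>] a0(3) by simp
qed

lemma admissible_entry_at_pivot:
  fixes M Q :: "'a::field mat"
  assumes M: "M \<in> Nm n" and Q: "Q \<in> carrier_mat n n" "subperm Q" and piv: "pivot_pattern n Q M"
    and ij: "i < j" "j < n" and MQ: "M $$ (i,j) = Q $$ (i,j)"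
  shows "admissible_entry (orbit_entries n (stab_before n M (i,j)) M (i,j)) (M $$ (i,j))"
proof (cases "Q $$ (i,j) = 0")
  case False
  hence "M $$ (i,j) = 1" using subperm_01[OF Q(2), of i j] Q(1) ij MQ by auto
  thus ?thesis using zero_notin_orbit_entries_at_pivot[OF M Q piv ij False]
    unfolding admissible_entry_def by auto
qed (use MQ in \<open>simp add: admissible_entry_def\<close>)

lemma four_block_mat_Nm:
  assumes "A1 \<in> Nm p" "A2 \<in> Nm q" "B \<in> carrier_mat p q"
  shows "four_block_mat A1 B (0\<^sub>m q p) A2 \<in> Nm (p + q)"
  using assms unfolding Nm_def by auto

lemma diag_block_four_block_mat:
  assumes "A1 \<in> carrier_mat p p" "A2 \<in> carrier_mat q q" "B \<in> carrier_mat p q"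
  shows "diag_block 0 p (four_block_mat A1 B (0\<^sub>m q p) A2) = A1"
    and "diag_block p q (four_block_mat A1 B (0\<^sub>m q p) A2) = A2"
  using assms by (auto intro!: eq_matI)

theorem theorem2p7:
  fixes A1 A2 Q1 Q2 Q12 :: "'a::field mat" and p q :: nat
  assumes "A1 \<in> Nm p" and "A2 \<in> Nm q"
    and "belitskii_cf p A1" and "belitskii_cf q A2"
    and "Q1 \<in> Nm p" and "Q2 \<in> Nm q" and "subperm Q1" and "subperm Q2"
    and "A1 \<in> QU p Q1" and "A2 \<in> QU q Q2"
    and "Q12 \<in> carrier_mat p q"
    and "subperm (four_block_mat Q1 Q12 (0\<^sub>m q p) Q2)"
  shows "belitskii_cf (p + q) (four_block_mat A1 Q12 (0\<^sub>m q p) A2)"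
proof -
  let ?M = "four_block_mat A1 Q12 (0\<^sub>m q p) A2" and ?Q = "four_block_mat Q1 Q12 (0\<^sub>m q p) Q2"
  note carriers = Nm_carrier[OF assms(1)] Nm_carrier[OF assms(2)]
    Nm_carrier[OF assms(5)] Nm_carrier[OF assms(6)] assms(11)
  have M: "?M \<in> Nm (p + q)" using four_block_mat_Nm[OF assms(1,2,11)] .
  have cf_blocks: "belitskii_cf p (diag_block 0 p ?M)" "belitskii_cf q (diag_block p q ?M)"
    using diag_block_four_block_mat[OF carriers(1,2,5)] assms(3,4) by simp_all
  have "pivot_pattern p Q1 A1" "pivot_pattern q Q2 A2"
    using assms(9,10) pivot_pattern_mult_Um carriers(3,4) assms(7,8) unfolding QU_def by blast+
  hence piv: "pivot_pattern (p + q) ?Q ?M" using pivot_pattern_four_block_mat carriers assms(12) by blast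
  have "admissible_entry (orbit_entries (p + q) (stab_before (p + q) ?M (i,j)) ?M (i,j)) (?M $$ (i,j))"
    if ij: "i < j" "j < p + q" for i j
  proof -
    consider "j < p" | "p \<le> i" | "i < p" "p \<le> j" by linarith
    thus ?thesis
    proof cases
      case 1 thus ?thesis using admissible_entry_diag_block[OF M _ ij(1) 1 cf_blocks(1)] by simp
    next
      case 2 thus ?thesis
        using admissible_entry_diag_block[OF M _ _ _ cf_blocks(2), of "i - p" "j - p"] ij by simp
    next
      case 3 thus ?thesis using admissible_entry_at_pivot[OF M _ assms(12) piv ij] carriers ij by simp
    qed
  qed
  thus ?thesis using M unfolding belitskii_cf_iff_admissible by blast
qed

end
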